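(* Let $D$ be a strongly connected digraph with $n$ vertices and exactly three complementarity eigenvalues. If $D$ contains a subdigraph isomorphic to the $\infty$-digraph $\infty(r,s)$, then $n=r+s-1$.
   Context: All digraphs are finite, without loops and without multiple arcs. For a digraph $D$ with adjacency matrix $A$ (on $n$ vertices), a real $\lambda$ is a complementarity eigenvalue if there is a nonzero $x\in\mathbb{R}^n$, $x\ge0$, with $Ax-\lambda x\ge 0$ and $\langle x,Ax-\lambda x\rangle=0$. Subdigraphs need not be induced. For $r,s\ge 2$, $\infty(r,s)$ is the digraph obtained from a directed cycle $\vec C_r$ and a directed cycle $\vec C_s$ by identifying one vertex of the first with one vertex of the second (so the two cycles share exactly one vertex). *)

theory Defs
  imports Main Complex_Main
begin

text \<open>A digraph on the vertex set {0..<n} is given by its arc relation A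
  (no loops; multiple arcs are impossible in a relation).\<close>
definition digraph :: "nat \<Rightarrow> (nat \<Rightarrow> nat \<Rightarrow> bool) \<Rightarrow> bool" where
  "digraph n A \<longleftrightarrow> (\<forall>u v. A u v \<longrightarrow> u < n \<and> v < n \<and> u \<noteq> v)"

definition adj :: "(nat \<Rightarrow> nat \<Rightarrow> bool) \<Rightarrow> nat \<Rightarrow> nat \<Rightarrow> real" where
  "adj A i j = (if A i j then 1 else 0)"

definition comp_eigenvalue :: "nat \<Rightarrow> (nat \<Rightarrow> nat \<Rightarrow> bool) \<Rightarrow> real \<Rightarrow> bool" where
  "comp_eigenvalue n A lam \<longleftrightarrow>
     (\<exists>x :: nat \<Rightarrow> real.
        (\<exists>i<n. x i \<noteq> 0) \<and> (\<forall>i<n. x i \<ge> 0) \<and>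
        (\<forall>i<n. (\<Sum>j<n. adj A i j * x j) - lam * x i \<ge> 0) \<and>
        (\<Sum>i<n. x i * ((\<Sum>j<n. adj A i j * x j) - lam * x i)) = 0)"

definition strongly_connected :: "nat \<Rightarrow> (nat \<Rightarrow> nat \<Rightarrow> bool) \<Rightarrow> bool" where
  "strongly_connected n A \<longleftrightarrow> (\<forall>u<n. \<forall>v<n. A\<^sup>*\<^sup>* u v)"

text \<open>The infinity digraph \<infinity>(r,s) on vertices {0..<r+s-1}: cycle 0\<rightarrow>1\<rightarrow>...\<rightarrow>r-1\<rightarrow>0
  and cycle 0\<rightarrow>r\<rightarrow>r+1\<rightarrow>...\<rightarrow>r+s-2\<rightarrow>0, sharing only vertex 0.\<close>
definition inf_vert2 :: "nat \<Rightarrow> nat \<Rightarrow> nat" where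
  "inf_vert2 r i = (if i = 0 then 0 else r + i - 1)"

definition inf_arc :: "nat \<Rightarrow> nat \<Rightarrow> nat \<Rightarrow> nat \<Rightarrow> bool" where
  "inf_arc r s u v \<longleftrightarrow>
     (\<exists>i<r. u = i \<and> v = (i + 1) mod r) \<or>
     (\<exists>i<s. u = inf_vert2 r i \<and> v = inf_vert2 r ((i + 1) mod s))"

text \<open>D contains a (not necessarily induced) subdigraph isomorphic to \<infinity>(r,s).\<close>
definition contains_infinity :: "nat \<Rightarrow> (nat \<Rightarrow> nat \<Rightarrow> bool) \<Rightarrow> nat \<Rightarrow> nat \<Rightarrow> bool" where
  "contains_infinity n A r s \<longleftrightarrow>
     (\<exists>f. inj_on f {0..<r+s-1} \<and> f ` {0..<r+s-1} \<subseteq> {0..<n} \<and>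
          (\<forall>u<r+s-1. \<forall>v<r+s-1. inf_arc r s u v \<longrightarrow> A (f u) (f v)))"

end

(*
  For a nonempty vertex set T inducing a strongly connected subdigraph, the Perron root of the
  principal submatrix A[T] is a complementarity eigenvalue of D: a nonnegative Perron vector of
  A[T], padded with zeros, satisfies the complementarity conditions. Perron roots strictly increase
  along proper inclusions of such sets. If n > r + s - 1, then a vertex of the copy of
  \<infinity>(r,s), its first cycle, the whole copy and D itself form a chain of four such sets, so D
  has at least four complementarity eigenvalues.

  The Perron-Frobenius facts needed are elementary: the Perron root is the largest mu admitting a
  semipositive x with A[T] x >= mu x (the supremum is attained by compactness), and strict
  monotonicity comes from positivity of Perron vectors on strongly connected sets.
*)

theory Submission
  imports Defs
begin

definition adj_mult :: "nat \<Rightarrow> (nat \<Rightarrow> nat \<Rightarrow> bool) \<Rightarrow> (nat \<Rightarrow> real) \<Rightarrow> nat \<Rightarrow> real" where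
  "adj_mult n A x i = (\<Sum>j<n. adj A i j * x j)"

definition semipositive_on :: "nat set \<Rightarrow> (nat \<Rightarrow> real) \<Rightarrow> bool" where
  "semipositive_on T x \<longleftrightarrow> (\<forall>i. 0 \<le> x i) \<and> (\<forall>i. i \<notin> T \<longrightarrow> x i = 0) \<and> (\<exists>i\<in>T. x i \<noteq> 0)"

text \<open>The vectors vanish outside \<open>T\<close>, so for \<open>T \<subseteq> {..<n}\<close> these are nonnegative (sub)eigenvectors
  of the principal submatrix of the adjacency matrix indexed by \<open>T\<close>.\<close>

definition subeigvec_on :: "nat \<Rightarrow> (nat \<Rightarrow> nat \<Rightarrow> bool) \<Rightarrow> nat set \<Rightarrow> real \<Rightarrow> (nat \<Rightarrow> real) \<Rightarrow> bool" where
  "subeigvec_on n A T mu x \<longleftrightarrow> semipositive_on T x \<and> (\<forall>i\<in>T. mu * x i \<le> adj_mult n A x i)"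

definition eigvec_on :: "nat \<Rightarrow> (nat \<Rightarrow> nat \<Rightarrow> bool) \<Rightarrow> nat set \<Rightarrow> real \<Rightarrow> (nat \<Rightarrow> real) \<Rightarrow> bool" where
  "eigvec_on n A T lam x \<longleftrightarrow> semipositive_on T x \<and> (\<forall>i\<in>T. adj_mult n A x i = lam * x i)"

definition strongly_connected_on :: "(nat \<Rightarrow> nat \<Rightarrow> bool) \<Rightarrow> nat set \<Rightarrow> bool" where
  "strongly_connected_on A T \<longleftrightarrow> (\<forall>u\<in>T. \<forall>v\<in>T. (\<lambda>a b. A a b \<and> a \<in> T \<and> b \<in> T)\<^sup>*\<^sup>* u v)"

lemma rtranclp_enters_set:
  assumes "R\<^sup>*\<^sup>* u v" "u \<notin> S" "v \<in> S"
  obtains a b where "R a b" "a \<notin> S" "b \<in> S"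
  using assms by (induction rule: rtranclp_induct) blast+

lemma strongly_connected_on_closed_subset:
  assumes sc: "strongly_connected_on A T" and k: "k \<in> T" "k \<in> Z"
    and closed: "\<And>a b. a \<in> Z \<Longrightarrow> A a b \<Longrightarrow> a \<in> T \<Longrightarrow> b \<in> T \<Longrightarrow> b \<in> Z"
  shows "T \<subseteq> Z"
proof
  fix v assume "v \<in> T"
  show "v \<in> Z"
  proof (rule ccontr)
    assume "v \<notin> Z"
    have "(\<lambda>a b. A a b \<and> a \<in> T \<and> b \<in> T)\<^sup>*\<^sup>* k v" using sc k(1) \<open>v \<in> T\<close>
      by (simp add: strongly_connected_on_def)
    then obtain a b where "A a b" "a \<in> T" "b \<in> T" "a \<in> Z" "b \<notin> Z"
      by (rule rtranclp_enters_set[of _ k v "- Z"]) (use k(2) \<open>v \<notin> Z\<close> in auto)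
    then show False using closed by blast
  qed
qed

lemma strongly_connected_on_singleton: "strongly_connected_on A {u}"
  by (simp add: strongly_connected_on_def)

lemma strongly_connected_on_lessThan:
  assumes "digraph n A" "strongly_connected n A"
  shows "strongly_connected_on A {..<n}"
proof -
  have "(\<lambda>a b. A a b \<and> a \<in> {..<n} \<and> b \<in> {..<n}) = A"
    using assms(1) by (auto simp: digraph_def)
  then show ?thesis using assms(2) by (simp add: strongly_connected_on_def strongly_connected_def)
qed

lemma strongly_connected_on_cycle:
  assumes arcs: "\<And>i. i < m \<Longrightarrow> A (g i) (g (Suc i mod m))"
  shows "strongly_connected_on A (g ` {..<m})"
proof -
  let ?R = "\<lambda>a b. A a b \<and> a \<in> g ` {..<m} \<and> b \<in> g ` {..<m}"
  have walk: "?R\<^sup>*\<^sup>* (g i) (g ((i + d) mod m))" if "i < m" for i d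
  proof (induction d)
    case 0
    then show ?case using that by simp
  next
    case (Suc d)
    have "?R (g ((i + d) mod m)) (g ((i + Suc d) mod m))"
      using arcs[of "(i + d) mod m"] that by (auto simp: mod_Suc_eq)
    with Suc show ?case by (rule rtranclp.rtrancl_into_rtrancl)
  qed
  show ?thesis
    unfolding strongly_connected_on_def
  proof (intro ballI)
    fix u v assume "u \<in> g ` {..<m}" "v \<in> g ` {..<m}"
    then obtain i j where "i < m" "j < m" "u = g i" "v = g j" by auto
    then show "?R\<^sup>*\<^sup>* u v" using walk[of i "m - i + j"] by simp
  qed
qed

lemma strongly_connected_on_Un:
  assumes "strongly_connected_on A S" "strongly_connected_on A T" "w \<in> S" "w \<in> T"
  shows "strongly_connected_on A (S \<union> T)"
proof -
  let ?R = "\<lambda>U a b. A a b \<and> a \<in> U \<and> b \<in> U"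
  have via_w: "(?R (S \<union> T))\<^sup>*\<^sup>* u w \<and> (?R (S \<union> T))\<^sup>*\<^sup>* w u"
    if "strongly_connected_on A U" "U \<subseteq> S \<union> T" "u \<in> U" "w \<in> U" for U u
  proof -
    have mono: "(?R U)\<^sup>*\<^sup>* \<le> (?R (S \<union> T))\<^sup>*\<^sup>*" by (rule rtranclp_mono) (use that(2) in auto)
    have "(?R U)\<^sup>*\<^sup>* u w" "(?R U)\<^sup>*\<^sup>* w u" using that(1,3,4)
      by (auto simp: strongly_connected_on_def)
    then show ?thesis using predicate2D[OF mono] by blast
  qed
  have hub: "(?R (S \<union> T))\<^sup>*\<^sup>* u w \<and> (?R (S \<union> T))\<^sup>*\<^sup>* w u" if "u \<in> S \<union> T" for u
    using that via_w[OF assms(1) _ _ assms(3)] via_w[OF assms(2) _ _ assms(4)] by blast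
  then show ?thesis unfolding strongly_connected_on_def by (meson rtranclp_trans)
qed

lemma adj_mult_nonneg: "(\<And>j. 0 \<le> x j) \<Longrightarrow> 0 \<le> adj_mult n A x i"
  unfolding adj_mult_def adj_def by (intro sum_nonneg) simp

lemma adj_mult_ge_arc:
  assumes "\<And>j. 0 \<le> x j" "A i j" "j < n"
  shows "x j \<le> adj_mult n A x i"
proof -
  have "adj A i j * x j \<le> adj_mult n A x i"
    unfolding adj_mult_def using assms by (intro member_le_sum) (auto simp: adj_def)
  then show ?thesis using assms(2) by (simp add: adj_def)
qed

lemma adj_mult_diff: "adj_mult n A (\<lambda>j. x j - c * y j) i = adj_mult n A x i - c * adj_mult n A y i"
  unfolding adj_mult_def by (simp add: sum_subtractf sum_distrib_left algebra_simps)

lemma adj_mult_scale: "adj_mult n A (\<lambda>j. c * x j) i = c * adj_mult n A x i"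
  unfolding adj_mult_def by (simp add: sum_distrib_left algebra_simps)

lemma adj_mult_add_unit:
  assumes "b < n"
  shows "adj_mult n A (\<lambda>j. x j + (if j = b then e else 0)) i = adj_mult n A x i + adj A i b * e"
proof -
  have "adj_mult n A (\<lambda>j. x j + (if j = b then e else 0)) i
      = (\<Sum>j<n. adj A i j * x j + (if j = b then adj A i b * e else 0))"
    unfolding adj_mult_def by (rule sum.cong) (auto simp: distrib_left)
  then show ?thesis using assms by (simp add: sum.distrib adj_mult_def)
qed

lemma comp_eigenvalue_if_eigvec_on:
  assumes T: "T \<subseteq> {..<n}" and x: "eigvec_on n A T lam x"
  shows "comp_eigenvalue n A lam"
proof -
  have nonneg: "\<And>i. 0 \<le> x i" and zero: "\<And>i. i \<notin> T \<Longrightarrow> x i = 0"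
    and eq: "\<And>i. i \<in> T \<Longrightarrow> adj_mult n A x i = lam * x i"
    using x by (auto simp: eigvec_on_def semipositive_on_def)
  obtain k where "k \<in> T" "x k \<noteq> 0" using x by (auto simp: eigvec_on_def semipositive_on_def)
  have slack: "0 \<le> adj_mult n A x i - lam * x i \<and> x i * (adj_mult n A x i - lam * x i) = 0" for i
    using eq[of i] zero[of i] adj_mult_nonneg[of x, OF nonneg] by (cases "i \<in> T") auto
  show ?thesis
    unfolding comp_eigenvalue_def
  proof (intro exI[of _ x] conjI)
    show "\<exists>i<n. x i \<noteq> 0" using \<open>k \<in> T\<close> \<open>x k \<noteq> 0\<close> T by blast
    show "(\<Sum>i<n. x i * ((\<Sum>j<n. adj A i j * x j) - lam * x i)) = 0"
      using slack by (intro sum.neutral) (simp add: adj_mult_def)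
  qed (use nonneg slack in \<open>auto simp: adj_mult_def\<close>)
qed

lemma eigvec_on_pos:
  assumes sc: "strongly_connected_on A T" and T: "T \<subseteq> {..<n}"
    and x: "eigvec_on n A T lam x" and u: "u \<in> T"
  shows "0 < x u"
proof (rule ccontr)
  assume "\<not> 0 < x u"
  have nonneg: "\<And>i. 0 \<le> x i" and eq: "\<And>i. i \<in> T \<Longrightarrow> adj_mult n A x i = lam * x i"
    using x by (auto simp: eigvec_on_def semipositive_on_def)
  obtain v where "v \<in> T" "x v \<noteq> 0" using x by (auto simp: eigvec_on_def semipositive_on_def)
  have "T \<subseteq> {i. x i = 0}"
  proof (rule strongly_connected_on_closed_subset[OF sc u])
    show "u \<in> {i. x i = 0}" using \<open>\<not> 0 < x u\<close> nonneg[of u] by simp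
    fix a b assume "a \<in> {i. x i = 0}" "A a b" "a \<in> T" "b \<in> T"
    have "x b \<le> adj_mult n A x a" using nonneg \<open>A a b\<close> \<open>b \<in> T\<close> T by (intro adj_mult_ge_arc) auto
    also have "\<dots> = 0" using eq[OF \<open>a \<in> T\<close>] \<open>a \<in> {i. x i = 0}\<close> by simp
    finally show "b \<in> {i. x i = 0}" using nonneg[of b] by simp
  qed
  then show False using \<open>v \<in> T\<close> \<open>x v \<noteq> 0\<close> by blast
qed

lemma largest_multiple_below:
  fixes x y :: "nat \<Rightarrow> real"
  assumes fin: "finite {i. 0 < y i}" and "0 < y j"
    and pos: "\<And>i. 0 < y i \<Longrightarrow> 0 < x i" and x: "\<And>i. 0 \<le> x i" and y: "\<And>i. 0 \<le> y i"
  obtains t k where "0 < t" "0 < y k" "x k = t * y k" "\<And>i. t * y i \<le> x i"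
proof -
  define t where "t = Min ((\<lambda>i. x i / y i) ` {i. 0 < y i})"
  have "t \<in> (\<lambda>i. x i / y i) ` {i. 0 < y i}"
    unfolding t_def using fin \<open>0 < y j\<close> by (intro Min_in) auto
  then obtain k where k: "0 < y k" "t = x k / y k" by auto
  have "t * y i \<le> x i" for i
  proof (cases "0 < y i")
    case True
    then have "t \<le> x i / y i" using fin unfolding t_def by simp
    then show ?thesis using True by (simp add: pos_le_divide_eq)
  next
    case False
    then show ?thesis using x[of i] y[of i] by simp
  qed
  moreover have "0 < t" using k pos[OF k(1)] by simp
  ultimately show ?thesis using that k by simp
qed

text \<open>With \<open>t y\<close> the largest multiple of \<open>y\<close> below \<open>x\<close>, if \<open>lam \<le> mu\<close> the zero set of \<open>x - t y\<close> is
  closed under arcs inside \<open>T\<close>, so it contains \<open>T\<close>; then \<open>y\<close> cannot vanish on \<open>T - S\<close>.\<close>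

lemma eigvec_on_less:
  assumes sc: "strongly_connected_on A T" and T: "T \<subseteq> {..<n}"
    and x: "eigvec_on n A T lam x" and ST: "S \<subset> T" and y: "eigvec_on n A S mu y"
  shows "mu < lam"
proof (rule ccontr)
  assume "\<not> mu < lam"
  have x_pos: "\<And>i. i \<in> T \<Longrightarrow> 0 < x i" using eigvec_on_pos[OF sc T x] .
  have x_eq: "\<And>i. i \<in> T \<Longrightarrow> adj_mult n A x i = lam * x i"
    and y_eq: "\<And>i. i \<in> S \<Longrightarrow> adj_mult n A y i = mu * y i"
    using x y by (auto simp: eigvec_on_def)
  have x_nonneg: "\<And>i. 0 \<le> x i" and y_nonneg: "\<And>i. 0 \<le> y i" and y_zero: "\<And>i. i \<notin> S \<Longrightarrow> y i = 0"
    using x y by (auto simp: eigvec_on_def semipositive_on_def)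
  have supp_y: "{i. 0 < y i} \<subseteq> S" using y_zero by force
  then have fin: "finite {i. 0 < y i}" using ST T
    by (meson finite_lessThan finite_subset psubset_imp_subset)
  obtain j where "0 < y j" using y y_nonneg
    by (force simp: eigvec_on_def semipositive_on_def less_le)
  have pos: "\<And>i. 0 < y i \<Longrightarrow> 0 < x i" using x_pos supp_y ST by blast
  obtain t k where t: "0 < t" "0 < y k" "x k = t * y k" "\<And>i. t * y i \<le> x i"
    using largest_multiple_below[of y j x, OF fin \<open>0 < y j\<close> pos x_nonneg y_nonneg] by blast
  define z where "z = (\<lambda>j. x j - t * y j)"
  have z_nonneg: "\<And>i. 0 \<le> z i" using t(4) by (simp add: z_def)
  have "k \<in> T" using t(2) supp_y ST by blast
  have "T \<subseteq> {i. z i = 0}"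
  proof (rule strongly_connected_on_closed_subset[OF sc \<open>k \<in> T\<close>])
    show "k \<in> {i. z i = 0}" using t(3) by (simp add: z_def)
    fix a b assume "a \<in> {i. z i = 0}" "A a b" "a \<in> T" "b \<in> T"
    then have xa: "x a = t * y a" by (simp add: z_def)
    then have "a \<in> S" using x_pos[OF \<open>a \<in> T\<close>] y_zero[of a] by (metis mult_zero_right less_irrefl)
    have "z b \<le> adj_mult n A z a" using z_nonneg \<open>A a b\<close> \<open>b \<in> T\<close> T by (intro adj_mult_ge_arc) auto
    also have "\<dots> = t * y a * (lam - mu)"
      using x_eq[OF \<open>a \<in> T\<close>] y_eq[OF \<open>a \<in> S\<close>] xa by (simp add: z_def adj_mult_diff algebra_simps)
    also have "\<dots> \<le> 0"
      using \<open>0 < t\<close> y_nonneg[of a] \<open>\<not> mu < lam\<close> by (simp add: mult_nonneg_nonpos)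
    finally show "b \<in> {i. z i = 0}" using z_nonneg[of b] by simp
  qed
  then have "T \<subseteq> {i. 0 < y i}" using x_pos t(1) by (force simp: z_def zero_less_mult_iff)
  then show False using supp_y ST by blast
qed

lemma subeigvec_on_le_card:
  assumes T: "T \<subseteq> {..<n}" and x: "subeigvec_on n A T mu x"
  shows "mu \<le> real n"
proof -
  have "finite T" using T finite_subset by blast
  have nonneg: "\<And>i. 0 \<le> x i" and zero: "\<And>i. i \<notin> T \<Longrightarrow> x i = 0"
    and ineq: "\<And>i. i \<in> T \<Longrightarrow> mu * x i \<le> adj_mult n A x i"
    using x by (auto simp: subeigvec_on_def semipositive_on_def)
  obtain j where "j \<in> T" "x j \<noteq> 0" using x by (auto simp: subeigvec_on_def semipositive_on_def)
  define M where "M = Max (x ` T)"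
  have le_M_on: "x i \<le> M" if "i \<in> T" for i
    using \<open>finite T\<close> that by (simp add: M_def)
  have le_M: "x i \<le> M" for i
    using le_M_on[of i] le_M_on[OF \<open>j \<in> T\<close>] zero[of i] nonneg[of j] by (cases "i \<in> T") auto
  have "0 < M" using le_M[of j] nonneg[of j] \<open>x j \<noteq> 0\<close> by linarith
  have "M \<in> x ` T" unfolding M_def using \<open>finite T\<close> \<open>j \<in> T\<close> by (intro Max_in) auto
  then obtain i where "i \<in> T" "x i = M" by blast
  have "mu * M \<le> adj_mult n A x i" using ineq[OF \<open>i \<in> T\<close>] \<open>x i = M\<close> by simp
  also have "\<dots> \<le> (\<Sum>j<n. M)"
    unfolding adj_mult_def using le_M nonneg \<open>0 < M\<close> by (intro sum_mono) (auto simp: adj_def)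
  finally show ?thesis using \<open>0 < M\<close> by simp
qed

lemma semipositive_on_add_unit:
  assumes x: "semipositive_on T x" and "b \<in> T" "0 \<le> e"
  shows "semipositive_on T (\<lambda>j. x j + (if j = b then e else 0))"
proof -
  obtain k where "k \<in> T" "x k \<noteq> 0" using x by (auto simp: semipositive_on_def)
  moreover have "0 \<le> x k" using x by (simp add: semipositive_on_def)
  ultimately have "x k + (if k = b then e else 0) \<noteq> 0" using \<open>0 \<le> e\<close> by auto
  then show ?thesis
    using x \<open>k \<in> T\<close> \<open>b \<in> T\<close> \<open>0 \<le> e\<close> unfolding semipositive_on_def by (auto intro!: bexI[of _ k])
qed

lemma subeigvec_on_strict_step:
  assumes T: "T \<subseteq> {..<n}" and x: "subeigvec_on n A T mu x"
    and ab: "A a b" "a \<in> T" "b \<in> T" and b_strict: "mu * x b < adj_mult n A x b"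
  obtains y where "subeigvec_on n A T mu y" "mu * y a < adj_mult n A y a"
    "\<And>i. mu * x i < adj_mult n A x i \<Longrightarrow> mu * y i < adj_mult n A y i"
proof -
  have ineq: "\<And>i. i \<in> T \<Longrightarrow> mu * x i \<le> adj_mult n A x i"
    using x by (simp add: subeigvec_on_def)
  define e where "e = (adj_mult n A x b - mu * x b) / (\<bar>mu\<bar> + 1)"
  have "0 < e" using b_strict by (simp add: e_def add_pos_nonneg)
  have "mu * e < adj_mult n A x b - mu * x b"
  proof -
    have "mu * e < (\<bar>mu\<bar> + 1) * e" using \<open>0 < e\<close>
      by (simp add: mult_strict_right_mono abs_ge_self le_less_trans)
    then show ?thesis by (simp add: e_def add_pos_nonneg)
  qed
  define y where "y = (\<lambda>j. x j + (if j = b then e else 0))"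
  have y_mult: "adj_mult n A y i = adj_mult n A x i + adj A i b * e" for i
    using adj_mult_add_unit[of b n A x e i] ab T by (auto simp: y_def)
  then have mono: "adj_mult n A x i \<le> adj_mult n A y i" for i
    using \<open>0 < e\<close> by (simp add: adj_def)
  have y_b: "mu * y b < adj_mult n A y b"
    using mono[of b] \<open>mu * e < _\<close> by (simp add: y_def algebra_simps)
  have y_other: "y i = x i" if "i \<noteq> b" for i using that by (simp add: y_def)
  have "semipositive_on T y"
    using semipositive_on_add_unit[of T x b e] x \<open>b \<in> T\<close> \<open>0 < e\<close>
    by (simp add: subeigvec_on_def y_def)
  moreover have "mu * y i \<le> adj_mult n A y i" if "i \<in> T" for i
    using y_b ineq[OF that] mono[of i] y_other[of i] by (cases "i = b") auto
  ultimately have "subeigvec_on n A T mu y" by (simp add: subeigvec_on_def)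
  moreover have "mu * y a < adj_mult n A y a"
  proof (cases "a = b")
    case False
    then show ?thesis
      using y_mult[of a] ineq[OF \<open>a \<in> T\<close>] y_other[of a] \<open>0 < e\<close> \<open>A a b\<close> by (simp add: adj_def)
  qed (use y_b in simp)
  moreover have "mu * y i < adj_mult n A y i" if "mu * x i < adj_mult n A x i" for i
    using that y_b mono[of i] y_other[of i] by (cases "i = b") auto
  ultimately show ?thesis using that by blast
qed

lemma subeigvec_on_strict_everywhere:
  assumes sc: "strongly_connected_on A T" and T: "T \<subseteq> {..<n}"
    and x: "subeigvec_on n A T mu x" and k: "k \<in> T" "mu * x k < adj_mult n A x k"
  obtains y where "subeigvec_on n A T mu y" "\<And>i. i \<in> T \<Longrightarrow> mu * y i < adj_mult n A y i"
  using x k(2)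
proof (induction "card {i\<in>T. \<not> mu * x i < adj_mult n A x i}" arbitrary: x rule: less_induct)
  case less
  show ?case
  proof (cases "\<forall>i\<in>T. mu * x i < adj_mult n A x i")
    case True
    then show ?thesis using less.prems by blast
  next
    case False
    then obtain u where "u \<in> T" "\<not> mu * x u < adj_mult n A x u" by blast
    then have "(\<lambda>a b. A a b \<and> a \<in> T \<and> b \<in> T)\<^sup>*\<^sup>* u k"
      using sc k(1) by (simp add: strongly_connected_on_def)
    then obtain a b where ab: "A a b" "a \<in> T" "b \<in> T"
      "\<not> mu * x a < adj_mult n A x a" "mu * x b < adj_mult n A x b"
      by (rule rtranclp_enters_set[of _ u k "{i. mu * x i < adj_mult n A x i}"])
        (use \<open>\<not> mu * x u < _\<close> less.prems(3) in auto)
    obtain y where y: "subeigvec_on n A T mu y" "mu * y a < adj_mult n A y a"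
      "\<And>i. mu * x i < adj_mult n A x i \<Longrightarrow> mu * y i < adj_mult n A y i"
      using subeigvec_on_strict_step[OF T less.prems(2) ab(1-3,5)] by blast
    have "{i\<in>T. \<not> mu * y i < adj_mult n A y i} \<subset> {i\<in>T. \<not> mu * x i < adj_mult n A x i}"
      using y(2,3) ab(2,4) by blast
    then have "card {i\<in>T. \<not> mu * y i < adj_mult n A y i}
        < card {i\<in>T. \<not> mu * x i < adj_mult n A x i}"
      using finite_subset[OF T] by (intro psubset_card_mono) auto
    then show ?thesis using less.hyps less.prems(1) y(1) y(3)[OF less.prems(3)] by blast
  qed
qed

lemma convergent_subseq_finite:
  fixes X :: "nat \<Rightarrow> 'a \<Rightarrow> real"
  assumes "finite I" "\<And>i. i \<in> I \<Longrightarrow> Bseq (\<lambda>m. X m i)"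
  shows "\<exists>r. strict_mono r \<and> (\<forall>i\<in>I. convergent (\<lambda>m. X (r m) i))"
  using assms
proof (induction I rule: finite_induct)
  case empty
  show ?case by (intro exI[of _ id] conjI strict_mono_id) simp
next
  case (insert i I)
  obtain r where r: "strict_mono r" "\<And>j. j \<in> I \<Longrightarrow> convergent (\<lambda>m. X (r m) j)"
    using insert.IH insert.prems by (metis insertCI)
  obtain r' where r': "strict_mono r'" "monoseq (\<lambda>m. X (r (r' m)) i)"
    using seq_monosub[of "\<lambda>m. X (r m) i"] by blast
  show ?case
  proof (intro exI[of _ "r \<circ> r'"] conjI ballI)
    show "strict_mono (r \<circ> r')" using r(1) r'(1) by (rule strict_mono_o)
    fix j assume "j \<in> insert i I"
    then show "convergent (\<lambda>m. X ((r \<circ> r') m) j)"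
    proof
      assume "j = i"
      have "Bseq (\<lambda>m. X (r (r' m)) i)" using Bseq_subseq[OF insert.prems[of i]] by simp
      then show ?thesis using r'(2) \<open>j = i\<close> by (simp add: Bseq_monoseq_convergent)
    next
      assume "j \<in> I"
      then show ?thesis using convergent_subseq_convergent[OF r(2) r'(1)] by (simp add: o_def)
    qed
  qed
qed

lemma subeigvec_on_normalize:
  assumes "finite T" and x: "subeigvec_on n A T mu x"
  obtains y where "subeigvec_on n A T mu y" "(\<Sum>i\<in>T. y i) = 1"
proof -
  have nonneg: "\<And>i. 0 \<le> x i" and ineq: "\<And>i. i \<in> T \<Longrightarrow> mu * x i \<le> adj_mult n A x i"
    using x by (auto simp: subeigvec_on_def semipositive_on_def)
  obtain j where "j \<in> T" "x j \<noteq> 0" using x by (auto simp: subeigvec_on_def semipositive_on_def)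
  then have "0 < (\<Sum>i\<in>T. x i)"
    using nonneg[of j] by (intro sum_pos2[OF \<open>finite T\<close>]) (auto simp: nonneg less_le)
  define c where "c = inverse (\<Sum>i\<in>T. x i)"
  have "0 < c" using \<open>0 < (\<Sum>i\<in>T. x i)\<close> by (simp add: c_def)
  have "mu * (c * x i) \<le> adj_mult n A (\<lambda>j. c * x j) i" if "i \<in> T" for i
    using mult_left_mono[OF ineq[OF that] less_imp_le[OF \<open>0 < c\<close>]]
    by (simp add: adj_mult_scale algebra_simps)
  then have "subeigvec_on n A T mu (\<lambda>i. c * x i)"
    using x \<open>0 < c\<close> by (auto simp: subeigvec_on_def semipositive_on_def)
  moreover have "(\<Sum>i\<in>T. c * x i) = 1"
    using \<open>0 < (\<Sum>i\<in>T. x i)\<close> by (simp add: c_def sum_distrib_left[symmetric])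
  ultimately show ?thesis using that by blast
qed

lemma subeigvec_on_pointwise_limit:
  assumes X: "\<And>m. subeigvec_on n A T (mu m) (X m)" "\<And>m. (\<Sum>i\<in>T. X m i) = 1"
    and lim: "mu \<longlonglongrightarrow> rho" "\<And>i. (\<lambda>m. X m i) \<longlonglongrightarrow> x i"
  shows "subeigvec_on n A T rho x"
proof -
  have nonneg: "0 \<le> x i" for i
    using lim(2)[of i] X(1)
    by (intro LIMSEQ_le_const[of _ _ 0]) (auto simp: subeigvec_on_def semipositive_on_def)
  have zero: "x i = 0" if "i \<notin> T" for i
  proof -
    have "(\<lambda>m. X m i) = (\<lambda>m. 0)" using X(1) that
      by (auto simp: subeigvec_on_def semipositive_on_def)
    then show ?thesis using lim(2)[of i] by (simp add: LIMSEQ_const_iff)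
  qed
  have "(\<lambda>m. \<Sum>i\<in>T. X m i) \<longlonglongrightarrow> (\<Sum>i\<in>T. x i)" using lim(2) by (intro tendsto_sum) auto
  then have "(\<Sum>i\<in>T. x i) = 1" using X(2) by (simp add: LIMSEQ_const_iff)
  then have "\<exists>i\<in>T. x i \<noteq> 0" by (metis sum.neutral zero_neq_one)
  moreover have "rho * x i \<le> adj_mult n A x i" if "i \<in> T" for i
  proof -
    have "(\<lambda>m. adj_mult n A (X m) i - mu m * X m i) \<longlonglongrightarrow> adj_mult n A x i - rho * x i"
      unfolding adj_mult_def by (intro tendsto_intros lim)
    moreover have "0 \<le> adj_mult n A (X m) i - mu m * X m i" for m
      using X(1)[of m] that by (auto simp: subeigvec_on_def)
    ultimately show ?thesis using LIMSEQ_le_const[of _ _ 0] by fastforce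
  qed
  ultimately show ?thesis using nonneg zero by (auto simp: subeigvec_on_def semipositive_on_def)
qed

lemma subeigvec_on_limit_value:
  assumes "finite T"
    and X: "\<And>m. subeigvec_on n A T (mu m) (X m)" "\<And>m. (\<Sum>i\<in>T. X m i) = 1"
    and "mu \<longlonglongrightarrow> rho"
  obtains x where "subeigvec_on n A T rho x"
proof -
  have X_bounds: "0 \<le> X m i \<and> X m i \<le> 1" for m i
  proof (cases "i \<in> T")
    case True
    have nonneg: "\<And>j. 0 \<le> X m j" using X(1)[of m]
      by (simp add: subeigvec_on_def semipositive_on_def)
    then have "X m i \<le> (\<Sum>j\<in>T. X m j)" using \<open>finite T\<close> True by (intro member_le_sum) auto
    then show ?thesis using nonneg[of i] X(2)[of m] by simp
  next
    case False
    then show ?thesis using X(1)[of m] by (simp add: subeigvec_on_def semipositive_on_def)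
  qed
  have "Bseq (\<lambda>m. X m i)" for i using X_bounds by (intro BseqI'[of _ 1]) auto
  then obtain r where r: "strict_mono r" "\<And>i. i \<in> T \<Longrightarrow> convergent (\<lambda>m. X (r m) i)"
    using convergent_subseq_finite[OF \<open>finite T\<close>, of X] by blast
  have "convergent (\<lambda>m. X (r m) i)" for i
  proof (cases "i \<in> T")
    case False
    then have "(\<lambda>m. X (r m) i) = (\<lambda>m. 0)" using X(1)
      by (auto simp: subeigvec_on_def semipositive_on_def)
    then show ?thesis by (simp add: convergent_const)
  qed (rule r(2))
  then have X_lim: "(\<lambda>m. X (r m) i) \<longlonglongrightarrow> lim (\<lambda>m. X (r m) i)" for i
    by (simp add: convergent_LIMSEQ_iff)
  have mu_lim: "(\<lambda>m. mu (r m)) \<longlonglongrightarrow> rho"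
    using LIMSEQ_subseq_LIMSEQ[OF \<open>mu \<longlonglongrightarrow> rho\<close> r(1)] by (simp add: o_def)
  have "\<And>m. subeigvec_on n A T (mu (r m)) (X (r m))" "\<And>m. (\<Sum>i\<in>T. X (r m) i) = 1"
    using X by auto
  then have "subeigvec_on n A T rho (\<lambda>i. lim (\<lambda>m. X (r m) i))"
    using mu_lim X_lim by (rule subeigvec_on_pointwise_limit)
  then show ?thesis using that by blast
qed

lemma subeigvec_on_maximal_exists:
  assumes T: "T \<subseteq> {..<n}" "T \<noteq> {}"
  obtains rho x where "subeigvec_on n A T rho x" "\<And>mu y. subeigvec_on n A T mu y \<Longrightarrow> mu \<le> rho"
proof -
  have "finite T" using T(1) finite_lessThan by (rule finite_subset)
  define M where "M = {mu. \<exists>x. subeigvec_on n A T mu x}"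
  have bdd: "bdd_above M" using subeigvec_on_le_card[OF T(1)] by (auto simp: M_def bdd_above_def)
  have "subeigvec_on n A T 0 (\<lambda>i. if i \<in> T then 1 else 0)"
    using T(2) by (auto simp: subeigvec_on_def semipositive_on_def intro!: adj_mult_nonneg)
  then have "M \<noteq> {}" by (auto simp: M_def)
  define rho where "rho = Sup M"
  have upper: "mu \<le> rho" if "subeigvec_on n A T mu y" for mu y
    using that bdd unfolding rho_def by (intro cSup_upper) (auto simp: M_def)
  have "\<exists>mu y. subeigvec_on n A T mu y \<and> (\<Sum>i\<in>T. y i) = 1 \<and> rho - 1 / Suc m < mu" for m
  proof -
    obtain mu where "mu \<in> M" "rho - 1 / Suc m < mu"
      using less_cSup_iff[OF \<open>M \<noteq> {}\<close> bdd, of "rho - 1 / Suc m"] by (auto simp: rho_def)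
    from \<open>mu \<in> M\<close> obtain x where "subeigvec_on n A T mu x" by (auto simp: M_def)
    then obtain y where "subeigvec_on n A T mu y" "(\<Sum>i\<in>T. y i) = 1"
      by (rule subeigvec_on_normalize[OF \<open>finite T\<close>])
    with \<open>rho - 1 / Suc m < mu\<close> show ?thesis by blast
  qed
  then obtain mu X where X: "\<And>m. subeigvec_on n A T (mu m) (X m)" "\<And>m. (\<Sum>i\<in>T. X m i) = 1"
    and mu_lower: "\<And>m. rho - 1 / Suc m < mu m"
    by metis
  have "mu \<longlonglongrightarrow> rho"
  proof (rule tendsto_sandwich[of "\<lambda>m. rho - 1 / Suc m" _ _ "\<lambda>m. rho"])
    show "\<forall>\<^sub>F m in sequentially. rho - 1 / Suc m \<le> mu m" using mu_lower by (simp add: less_imp_le)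
    show "\<forall>\<^sub>F m in sequentially. mu m \<le> rho" by (intro always_eventually allI upper[OF X(1)])
    show "(\<lambda>m. rho - 1 / Suc m) \<longlonglongrightarrow> rho"
      using tendsto_diff[OF tendsto_const LIMSEQ_inverse_real_of_nat]
      by (simp add: inverse_eq_divide)
  qed simp
  then obtain x where "subeigvec_on n A T rho x" by (rule subeigvec_on_limit_value[OF \<open>finite T\<close> X])
  then show ?thesis using that upper by blast
qed

text \<open>If some inequality were strict, it could be made strict everywhere, and then \<open>rho\<close> could be
  increased.\<close>

lemma eigvec_on_if_maximal:
  assumes sc: "strongly_connected_on A T" and T: "T \<subseteq> {..<n}"
    and x: "subeigvec_on n A T rho x" and maximal: "\<And>mu y. subeigvec_on n A T mu y \<Longrightarrow> mu \<le> rho"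
  shows "eigvec_on n A T rho x"
proof -
  have "adj_mult n A x i = rho * x i" if "i \<in> T" for i
  proof (rule ccontr)
    assume "adj_mult n A x i \<noteq> rho * x i"
    then have "rho * x i < adj_mult n A x i" using x that by (auto simp: subeigvec_on_def)
    then obtain y where y: "subeigvec_on n A T rho y" "\<And>i. i \<in> T \<Longrightarrow> rho * y i < adj_mult n A y i"
      using subeigvec_on_strict_everywhere[OF sc T x \<open>i \<in> T\<close>] by blast
    have "finite T" using T finite_lessThan by (rule finite_subset)
    have y_nonneg: "\<And>i. 0 \<le> y i" using y(1) by (simp add: subeigvec_on_def semipositive_on_def)
    define d where "d = Min ((\<lambda>i. (adj_mult n A y i - rho * y i) / (y i + 1)) ` T)"
    have "0 < d"
      unfolding d_def using \<open>finite T\<close> \<open>i \<in> T\<close> y(2) y_nonneg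
      by (subst Min_gr_iff) (auto intro!: divide_pos_pos simp: add_nonneg_pos)
    have "(rho + d) * y j \<le> adj_mult n A y j" if "j \<in> T" for j
    proof -
      have "d \<le> (adj_mult n A y j - rho * y j) / (y j + 1)"
        unfolding d_def using \<open>finite T\<close> that by simp
      then have "d * (y j + 1) \<le> adj_mult n A y j - rho * y j"
        using y_nonneg[of j] by (simp add: pos_le_divide_eq add_nonneg_pos)
      then show ?thesis using \<open>0 < d\<close> by (simp add: algebra_simps)
    qed
    then have "subeigvec_on n A T (rho + d) y" using y(1) by (simp add: subeigvec_on_def)
    then show False using maximal \<open>0 < d\<close> by fastforce
  qed
  then show ?thesis using x by (simp add: eigvec_on_def subeigvec_on_def)
qed

text \<open>Only meaningful for nonempty strongly connected \<open>T\<close>, where an eigenvector exists.\<close>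

definition perron_root :: "nat \<Rightarrow> (nat \<Rightarrow> nat \<Rightarrow> bool) \<Rightarrow> nat set \<Rightarrow> real" where
  "perron_root n A T = (SOME lam. \<exists>x. eigvec_on n A T lam x)"

lemma eigvec_on_perron_root:
  assumes sc: "strongly_connected_on A T" and T: "T \<subseteq> {..<n}" "T \<noteq> {}"
  obtains x where "eigvec_on n A T (perron_root n A T) x"
proof -
  obtain rho x where "subeigvec_on n A T rho x" "\<And>mu y. subeigvec_on n A T mu y \<Longrightarrow> mu \<le> rho"
    using subeigvec_on_maximal_exists[OF T, where A = A] by blast
  then have "eigvec_on n A T rho x" by (rule eigvec_on_if_maximal[OF sc T(1)])
  then have "\<exists>lam x. eigvec_on n A T lam x" by blast
  then have "\<exists>x. eigvec_on n A T (perron_root n A T) x"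
    unfolding perron_root_def by (rule someI_ex)
  then show ?thesis using that by blast
qed

lemma comp_eigenvalue_perron_root:
  assumes "strongly_connected_on A T" "T \<subseteq> {..<n}" "T \<noteq> {}"
  shows "comp_eigenvalue n A (perron_root n A T)"
proof -
  obtain x where "eigvec_on n A T (perron_root n A T) x"
    using eigvec_on_perron_root[OF assms] by blast
  then show ?thesis by (rule comp_eigenvalue_if_eigvec_on[OF assms(2)])
qed

lemma perron_root_less:
  assumes sc: "strongly_connected_on A S" "strongly_connected_on A T"
    and "S \<noteq> {}" "S \<subset> T" "T \<subseteq> {..<n}"
  shows "perron_root n A S < perron_root n A T"
proof -
  have "T \<noteq> {}" "S \<subseteq> {..<n}" using assms(3-5) by auto
  obtain x where x: "eigvec_on n A T (perron_root n A T) x"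
    using eigvec_on_perron_root[OF sc(2) \<open>T \<subseteq> {..<n}\<close> \<open>T \<noteq> {}\<close>] by blast
  obtain y where y: "eigvec_on n A S (perron_root n A S) y"
    using eigvec_on_perron_root[OF sc(1) \<open>S \<subseteq> {..<n}\<close> \<open>S \<noteq> {}\<close>] by blast
  show ?thesis using eigvec_on_less[OF sc(2) \<open>T \<subseteq> {..<n}\<close> x \<open>S \<subset> T\<close> y] .
qed

lemma inf_vert2_less: "0 < r \<Longrightarrow> i < s \<Longrightarrow> inf_vert2 r i < r + s - 1"
  by (auto simp: inf_vert2_def)

lemma infinity_vertices:
  assumes "0 < r" "0 < s"
  shows "{0..<r+s-1} = {..<r} \<union> inf_vert2 r ` {..<s}"
proof
  show "{0..<r+s-1} \<subseteq> {..<r} \<union> inf_vert2 r ` {..<s}"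
  proof
    fix p assume p: "p \<in> {0..<r+s-1}"
    show "p \<in> {..<r} \<union> inf_vert2 r ` {..<s}"
    proof (cases "p < r")
      case False
      then have "p = inf_vert2 r (p - r + 1)" "p - r + 1 < s" using p by (auto simp: inf_vert2_def)
      then show ?thesis by blast
    qed simp
  qed
  show "{..<r} \<union> inf_vert2 r ` {..<s} \<subseteq> {0..<r+s-1}"
    using assms inf_vert2_less[OF assms(1)] by auto
qed

lemma contains_infinity_cycles:
  assumes "contains_infinity n A r s" "0 < r" "0 < s"
  obtains f where "inj_on f {0..<r+s-1}" "f ` {0..<r+s-1} \<subseteq> {..<n}"
    "\<And>i. i < r \<Longrightarrow> A (f i) (f (Suc i mod r))"
    "\<And>i. i < s \<Longrightarrow> A (f (inf_vert2 r i)) (f (inf_vert2 r (Suc i mod s)))"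
proof -
  obtain f where inj: "inj_on f {0..<r+s-1}" and into: "f ` {0..<r+s-1} \<subseteq> {0..<n}"
    and arcs: "\<And>u v. u < r+s-1 \<Longrightarrow> v < r+s-1 \<Longrightarrow> inf_arc r s u v \<Longrightarrow> A (f u) (f v)"
    using assms(1) by (auto simp: contains_infinity_def)
  have "A (f i) (f (Suc i mod r))" if "i < r" for i
  proof (rule arcs)
    show "inf_arc r s i (Suc i mod r)" unfolding inf_arc_def using that by (intro disjI1) auto
    show "i < r + s - 1" "Suc i mod r < r + s - 1"
      using that assms(3) mod_less_divisor[OF assms(2), of "Suc i"] by linarith+
  qed
  moreover have "A (f (inf_vert2 r i)) (f (inf_vert2 r (Suc i mod s)))" if "i < s" for i
  proof (rule arcs)
    show "inf_arc r s (inf_vert2 r i) (inf_vert2 r (Suc i mod s))"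
      unfolding inf_arc_def using that by (intro disjI2) auto
    show "inf_vert2 r i < r + s - 1" by (rule inf_vert2_less[OF assms(2) that])
    show "inf_vert2 r (Suc i mod s) < r + s - 1"
      by (rule inf_vert2_less[OF assms(2) mod_less_divisor[OF assms(3)]])
  qed
  moreover have "f ` {0..<r+s-1} \<subseteq> {..<n}" using into by auto
  ultimately show ?thesis using that inj by blast
qed

lemma contains_infinity_strict_chain:
  assumes "contains_infinity n A r s" "2 \<le> r" "2 \<le> s"
  obtains u C E where "{u} \<subset> C" "C \<subset> E" "E \<subseteq> {..<n}" "card E = r + s - 1"
    "strongly_connected_on A C" "strongly_connected_on A E"
proof -
  have "0 < r" "0 < s" using assms(2,3) by auto
  obtain f where inj: "inj_on f {0..<r+s-1}" and into: "f ` {0..<r+s-1} \<subseteq> {..<n}"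
    and arcs1: "\<And>i. i < r \<Longrightarrow> A (f i) (f (Suc i mod r))"
    and arcs2: "\<And>i. i < s \<Longrightarrow> A (f (inf_vert2 r i)) (f (inf_vert2 r (Suc i mod s)))"
    using contains_infinity_cycles[OF assms(1) \<open>0 < r\<close> \<open>0 < s\<close>] by blast
  define C where "C = f ` {..<r}"
  define C' where "C' = (\<lambda>i. f (inf_vert2 r i)) ` {..<s}"
  define E where "E = f ` {0..<r+s-1}"
  have "strongly_connected_on A C" unfolding C_def using arcs1 by (rule strongly_connected_on_cycle)
  moreover have "strongly_connected_on A C'" unfolding C'_def using arcs2
    by (rule strongly_connected_on_cycle)
  moreover have "f 0 \<in> C" "f 0 \<in> C'"
    using \<open>0 < r\<close> \<open>0 < s\<close> by (auto simp: C_def C'_def inf_vert2_def intro!: image_eqI[of _ _ 0])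
  moreover have "E = C \<union> C'"
    unfolding E_def C_def C'_def infinity_vertices[OF \<open>0 < r\<close> \<open>0 < s\<close>] image_Un image_image ..
  ultimately have "strongly_connected_on A E" by (metis strongly_connected_on_Un)
  have "0 \<in> {0..<r+s-1}" "1 \<in> {0..<r+s-1}" using assms(2,3) by auto
  then have "f 1 \<noteq> f 0" using inj_onD[OF inj] by fastforce
  then have "{f 0} \<subset> C" using \<open>f 0 \<in> C\<close> assms(2) by (auto simp: C_def)
  have "f r \<notin> C"
  proof
    assume "f r \<in> C"
    then obtain i where "i < r" "f r = f i" by (auto simp: C_def)
    moreover have "r \<in> {0..<r+s-1}" using assms(3) by auto
    ultimately show False using inj_onD[OF inj, of r i] by auto
  qed
  then have "C \<subset> E" using assms(3) by (auto simp: C_def E_def)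
  moreover have "E \<subseteq> {..<n}" using into by (simp add: E_def)
  moreover have "card E = r + s - 1" using card_image[OF inj] by (simp add: E_def)
  ultimately show ?thesis
    using that[OF \<open>{f 0} \<subset> C\<close>] \<open>strongly_connected_on A C\<close> \<open>strongly_connected_on A E\<close> by blast
qed

theorem mainTheorem4:
  fixes n r s :: nat and A :: "nat \<Rightarrow> nat \<Rightarrow> bool"
  assumes "digraph n A"
    and "strongly_connected n A"
    and "card {lam. comp_eigenvalue n A lam} = 3"
    and "r \<ge> 2" and "s \<ge> 2"
    and "contains_infinity n A r s"
  shows "n = r + s - 1"
proof (rule ccontr)
  assume "n \<noteq> r + s - 1"
  obtain u C E where chain: "{u} \<subset> C" "C \<subset> E" "E \<subseteq> {..<n}" "card E = r + s - 1"
    and sc: "strongly_connected_on A C" "strongly_connected_on A E"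
    using contains_infinity_strict_chain[OF assms(6,4,5)] by blast
  have "E \<subset> {..<n}" using chain(3,4) \<open>n \<noteq> r + s - 1\<close> by auto
  have sc_all: "strongly_connected_on A {..<n}" using assms(1,2)
    by (rule strongly_connected_on_lessThan)
  let ?p = "perron_root n A"
  have "?p {u} < ?p C" "?p C < ?p E" "?p E < ?p {..<n}"
    using perron_root_less[OF strongly_connected_on_singleton sc(1)]
      perron_root_less[OF sc] perron_root_less[OF sc(2) sc_all] chain \<open>E \<subset> {..<n}\<close> by auto
  then have "card {?p {u}, ?p C, ?p E, ?p {..<n}} = 4" by auto
  moreover have "{?p {u}, ?p C, ?p E, ?p {..<n}} \<subseteq> {lam. comp_eigenvalue n A lam}"
  proof -
    have "comp_eigenvalue n A (?p {u})" "comp_eigenvalue n A (?p C)" "comp_eigenvalue n A (?p E)"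
      "comp_eigenvalue n A (?p {..<n})"
      using chain
      by (auto intro!: comp_eigenvalue_perron_root strongly_connected_on_singleton sc sc_all)
    then show ?thesis by simp
  qed
  moreover have "finite {lam. comp_eigenvalue n A lam}"
    using assms(3) by (metis card.infinite zero_neq_numeral)
  ultimately have "4 \<le> card {lam. comp_eigenvalue n A lam}" by (metis card_mono)
  then show False using assms(3) by simp
qed

end
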